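(* Let $\mathbb{F}$ be a finite field and $n\ge2$. Let $\mathcal{F}: 0\subsetneq V_1\subsetneq V_2=\mathbb{F}^n$ and $\mathcal{F}': 0\subsetneq V'_1\subsetneq V'_2=\mathbb{F}^n$ be two flags of length $2$. Then the semigroups $\varphi(\mathcal{F})$ and $\varphi(\mathcal{F}')$ are isomorphic if and only if $\{\dim V_1,\dim(V_2/V_1)\}=\{\dim V'_1,\dim(V'_2/V'_1)\}$.
   Context: $M(n,\mathbb{F})$ is the semigroup of $n\times n$ matrices over $\mathbb{F}$, identified with linear operators on $\mathbb{F}^n$. For a flag $\mathcal{F}: 0=V_0\subsetneq V_1\subsetneq\cdots\subsetneq V_k=\mathbb{F}^n$, $\varphi(\mathcal{F})=\{a\in M(n,\mathbb{F}) : a(V_i)\subseteq V_{i-1}\text{ for all } i=1,\dots,k\}$. Isomorphism means semigroup isomorphism. *)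

theory Defs
  imports "HOL-Analysis.Analysis"
begin

definition is_flag :: "('a::field ^ 'n) set list \<Rightarrow> bool" where
  "is_flag Vs \<longleftrightarrow> length Vs \<ge> 1 \<and> (\<forall>V\<in>set Vs. vec.subspace V)
     \<and> Vs ! 0 = {0} \<and> last Vs = UNIV
     \<and> (\<forall>i. Suc i < length Vs \<longrightarrow> Vs ! i \<subset> Vs ! Suc i)"

definition flag_semigroup :: "('a::field ^ 'n) set list \<Rightarrow> ('a ^ 'n ^ 'n) set" where
  "flag_semigroup Vs = {A. \<forall>i. 1 \<le> i \<and> i < length Vs \<longrightarrow> (\<lambda>v. A *v v) ` (Vs ! i) \<subseteq> Vs ! (i - 1)}"

definition semigroup_isomorphic :: "('a::field ^ 'n ^ 'n) set \<Rightarrow> ('a ^ 'n ^ 'n) set \<Rightarrow> bool" where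
  "semigroup_isomorphic S T \<longleftrightarrow>
     (\<exists>f. bij_betw f S T \<and> (\<forall>x\<in>S. \<forall>y\<in>S. f (x ** y) = f x ** f y))"

end

theory Submission
  imports Defs
begin

text \<open>For a flag 0 < V < F^n the semigroup phi consists of the matrices A with A V = 0 and
  A F^n \<subseteq> V, so all products in it vanish. Two such null semigroups are isomorphic as soon as
  they have the same cardinality, since any bijection fixing 0 is multiplicative. Restriction to
  a complement of V identifies phi with the linear maps from an (n - k)-dimensional space to V,
  where k = dim V, so phi has q^(k (n - k)) elements. Finally
  k (n - k) - l (n - l) = (k - l) (n - k - l), so equal cardinalities force l = k or l = n - k.\<close>

lemma (in finite_dimensional_vector_space) card_subspace:
  assumes "finite (UNIV :: 'a set)" and "subspace V"
  shows "card V = CARD('a) ^ dim V"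
proof -
  obtain B where B: "B \<subseteq> V" "independent B" "V \<subseteq> span B" "card B = dim V"
    by (rule basis_exists)
  have "finite B" using B(2) by (rule finiteI_independent)
  let ?comb = "\<lambda>u. \<Sum>v\<in>B. scale (u v) v"
  have V_eq: "V = range ?comb"
    using span_subspace[OF B(1,3) assms(2)] span_finite[OF \<open>finite B\<close>] by simp
  have "bij_betw ?comb (B \<rightarrow>\<^sub>E UNIV) V"
  proof (rule bij_betw_imageI)
    show "inj_on ?comb (B \<rightarrow>\<^sub>E UNIV)"
    proof (rule inj_onI)
      fix u w assume u: "u \<in> B \<rightarrow>\<^sub>E UNIV" and w: "w \<in> B \<rightarrow>\<^sub>E UNIV" and "?comb u = ?comb w"
      then have diff: "(\<Sum>v\<in>B. scale (u v - w v) v) = 0"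
        by (simp add: scale_left_diff_distrib sum_subtractf)
      have "u v = w v" if "v \<in> B" for v
      proof (rule ccontr)
        assume "u v \<noteq> w v"
        with diff that have "dependent B"
          unfolding dependent_finite[OF \<open>finite B\<close>] by (intro exI[of _ "\<lambda>v. u v - w v"]) auto
        with B(2) show False by contradiction
      qed
      then show "u = w" by (rule PiE_ext[OF u w])
    qed
    show "?comb ` (B \<rightarrow>\<^sub>E UNIV) = V"
    proof
      show "?comb ` (B \<rightarrow>\<^sub>E UNIV) \<subseteq> V"
        using V_eq by blast
      show "V \<subseteq> ?comb ` (B \<rightarrow>\<^sub>E UNIV)"
      proof
        fix x assume "x \<in> V"
        then obtain u where "x = ?comb u"
          using V_eq by blast
        also have "\<dots> = ?comb (restrict u B)" by (rule sum.cong) simp_all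
        finally show "x \<in> ?comb ` (B \<rightarrow>\<^sub>E UNIV)" by (rule image_eqI[where x = "restrict u B"]) simp
      qed
    qed
  qed
  then have "card V = card (B \<rightarrow>\<^sub>E (UNIV :: 'a set))"
    by (simp add: bij_betw_same_card)
  also have "\<dots> = CARD('a) ^ dim V"
    using \<open>finite B\<close> B(4) by (simp add: card_PiE)
  finally show ?thesis .
qed

lemma matrix_eq_if_eq_on_spanning_set:
  fixes A A' :: "'a::field ^ 'n ^ 'm"
  assumes "vec.span C = UNIV" and "\<And>c. c \<in> C \<Longrightarrow> A *v c = A' *v c"
  shows "A = A'"
  using vec.linear_eq_on_span[OF matrix_vector_mul_linear_gen matrix_vector_mul_linear_gen assms(2)] assms(1)
  by (auto simp: matrix_eq)

lemma matrix_with_values_on_independent: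
  fixes f :: "'a::field ^ 'n \<Rightarrow> 'a ^ 'm"
  assumes "vec.independent C"
  obtains A :: "'a ^ 'n ^ 'm" where "\<And>c. c \<in> C \<Longrightarrow> A *v c = f c"
proof
  let ?g = "vec.construct C f"
  fix c assume "c \<in> C"
  have "matrix ?g *v c = ?g c"
    by (rule matrix_vector_mul(1)[OF vec.linear_construct[OF assms], THEN fun_cong])
  also have "\<dots> = f c"
    by (rule vec.construct_basis[OF assms \<open>c \<in> C\<close>])
  finally show "matrix ?g *v c = f c" .
qed

lemma card_matrices_vanishing_on_with_range_in:
  fixes V :: "('a::field ^ 'n) set" and W :: "('a ^ 'm) set"
  assumes "vec.subspace V" and "vec.subspace W"
  shows "card {A :: 'a ^ 'n ^ 'm. (\<forall>v\<in>V. A *v v = 0) \<and> (\<forall>v. A *v v \<in> W)}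
    = card W ^ (CARD('n) - vec.dim V)"
proof -
  let ?S = "{A :: 'a ^ 'n ^ 'm. (\<forall>v\<in>V. A *v v = 0) \<and> (\<forall>v. A *v v \<in> W)}"
  obtain B where B: "B \<subseteq> V" "vec.independent B" "V \<subseteq> vec.span B" "card B = vec.dim V"
    by (rule vec.basis_exists)
  obtain C where C: "B \<subseteq> C" "vec.independent C" "UNIV \<subseteq> vec.span C"
    using vec.maximal_independent_subset_extend[of B UNIV] B(2) by auto
  have span_C: "vec.span C = UNIV" using C(3) by auto
  have "finite C" using C(2) by (rule vec.finiteI_independent)
  define D where "D = C - B"
  have "card C = CARD('n)"
    using vec.basis_card_eq_dim[of C UNIV] C vec_dim_card[where 'a='a and 'n='n] by auto
  then have card_D: "card D = CARD('n) - vec.dim V"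
    using card_Diff_subset[OF vec.finiteI_independent[OF B(2)] C(1)] B(4) by (simp add: D_def)
  let ?on_D = "\<lambda>A :: 'a ^ 'n ^ 'm. restrict ((*v) A) D"
  have "bij_betw ?on_D ?S (D \<rightarrow>\<^sub>E W)"
  proof (rule bij_betw_imageI)
    show "inj_on ?on_D ?S"
    proof (rule inj_onI)
      fix A A' assume A: "A \<in> ?S" and A': "A' \<in> ?S" and eq: "?on_D A = ?on_D A'"
      show "A = A'"
      proof (rule matrix_eq_if_eq_on_spanning_set[OF span_C])
        fix c assume "c \<in> C"
        show "A *v c = A' *v c"
        proof (cases "c \<in> B")
          case True then show ?thesis using A A' B(1) by auto
        next
          case False then show ?thesis using fun_cong[OF eq, of c] \<open>c \<in> C\<close> by (simp add: D_def)
        qed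
      qed
    qed
    show "?on_D ` ?S = D \<rightarrow>\<^sub>E W"
    proof
      show "?on_D ` ?S \<subseteq> D \<rightarrow>\<^sub>E W" by auto
      show "D \<rightarrow>\<^sub>E W \<subseteq> ?on_D ` ?S"
      proof
        fix h assume h: "h \<in> D \<rightarrow>\<^sub>E W"
        obtain A where A: "\<And>c. c \<in> C \<Longrightarrow> A *v c = (if c \<in> D then h c else 0)"
          using matrix_with_values_on_independent[OF C(2), of "\<lambda>c. if c \<in> D then h c else 0"]
          by blast
        have "(*v) A ` C \<subseteq> W"
          using A h vec.subspace_0[OF assms(2)] by (auto simp: PiE_iff)
        then have "vec.span ((*v) A ` C) \<subseteq> W"
          by (rule vec.span_minimal[OF _ assms(2)])
        then have "A *v v \<in> W" for v
          using vec.linear_span_image[OF matrix_vector_mul_linear_gen, of A C] span_C by auto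
        moreover have "A *v v = 0" if "v \<in> V" for v
        proof -
          have "A *v b = 0" if "b \<in> B" for b
            using A[of b] that C(1) by (auto simp: D_def)
          then show ?thesis
            using vec.linear_eq_0_on_span[OF matrix_vector_mul_linear_gen] B(3) that by blast
        qed
        moreover have "?on_D A = h"
          using h A by (auto simp: D_def PiE_iff extensional_def)
        ultimately show "h \<in> ?on_D ` ?S" by blast
      qed
    qed
  qed
  then have "card ?S = card (D \<rightarrow>\<^sub>E W)"
    by (simp add: bij_betw_same_card)
  also have "\<dots> = card W ^ (CARD('n) - vec.dim V)"
    using \<open>finite C\<close> card_D by (simp add: card_PiE D_def)
  finally show ?thesis .
qed

lemma matrix_mul_eq_0_if_range_sub_kernel:
  fixes A :: "'a::field ^ 'm ^ 'k" and B :: "'a ^ 'n ^ 'm"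
  assumes "\<forall>v\<in>V. A *v v = 0" and "\<forall>v. B *v v \<in> V"
  shows "A ** B = 0"
  using assms by (simp add: matrix_eq matrix_vector_mul_assoc[symmetric])

lemma semigroup_isomorphic_zero_product_iff_card_eq:
  fixes S T :: "('a::field ^ 'n ^ 'n) set"
  assumes "finite S" and "0 \<in> S" and "0 \<in> T"
    and zero_S: "\<forall>x\<in>S. \<forall>y\<in>S. x ** y = 0" and zero_T: "\<forall>x\<in>T. \<forall>y\<in>T. x ** y = 0"
  shows "semigroup_isomorphic S T \<longleftrightarrow> card S = card T"
proof
  assume "semigroup_isomorphic S T"
  then show "card S = card T"
    unfolding semigroup_isomorphic_def using bij_betw_same_card by blast
next
  assume "card S = card T"
  moreover have "0 < card S"
    using \<open>finite S\<close> \<open>0 \<in> S\<close> card_gt_0_iff by blast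
  ultimately have "finite T"
    by (metis card.infinite less_irrefl)
  then obtain g where g: "bij_betw g S T"
    using finite_same_card_bij \<open>finite S\<close> \<open>card S = card T\<close> by blast
  define f where "f = Transposition.transpose (g 0) 0 \<circ> g"
  have f: "bij_betw f S T"
    unfolding f_def using g by (rule bij_betw_trans) (simp add: bij_betwE[OF g] assms)
  have "f (x ** y) = f x ** f y" if "x \<in> S" and "y \<in> S" for x y
    using that zero_S zero_T bij_betwE[OF f] by (simp add: f_def)
  with f show "semigroup_isomorphic S T"
    unfolding semigroup_isomorphic_def by blast
qed

lemma mult_diff_eq_mult_diff_iff:
  fixes k l n :: nat
  assumes "k \<le> n" and "l \<le> n"
  shows "k * (n - k) = l * (n - l) \<longleftrightarrow> {k, n - k} = {l, n - l}"
proof -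
  define a b where "a = n - k" and "b = n - l"
  have "int a = int l + int b - int k"
    using assms by (simp add: a_def b_def of_nat_diff)
  then have "int (k * a) - int (l * b) = int k * (int l + int b - int k) - int l * int b"
    by (simp only: of_nat_mult)
  also have "\<dots> = (int k - int l) * (int b - int k)"
    by (simp add: algebra_simps)
  finally have "k * a = l * b \<longleftrightarrow> k = l \<or> k = b"
    by (metis eq_iff_diff_eq_0 mult_eq_0_iff of_nat_eq_iff)
  also have "\<dots> \<longleftrightarrow> {k, a} = {l, b}"
    using assms by (auto simp: a_def b_def doubleton_eq_iff)
  finally show ?thesis
    by (simp only: a_def b_def)
qed

lemma flag_semigroup_two_step:
  "flag_semigroup [{0}, V, UNIV]
    = {A :: 'a::field ^ 'n ^ 'n. (\<forall>v\<in>V. A *v v = 0) \<and> (\<forall>v. A *v v \<in> V)}"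
proof -
  have less_3: "(\<forall>i. Suc 0 \<le> i \<and> i < Suc (Suc (Suc 0)) \<longrightarrow> Q i) \<longleftrightarrow> Q (Suc 0) \<and> Q (Suc (Suc 0))"
    for Q by (auto simp: le_Suc_eq less_Suc_eq)
  show ?thesis
    unfolding flag_semigroup_def by (auto simp: less_3)
qed

lemma card_flag_semigroup_two_step:
  fixes V :: "('a::{field,finite} ^ 'n) set"
  assumes "vec.subspace V"
  shows "card (flag_semigroup [{0}, V, UNIV]) = CARD('a) ^ (vec.dim V * (CARD('n) - vec.dim V))"
  using card_matrices_vanishing_on_with_range_in[OF assms assms] vec.card_subspace[OF _ assms]
  by (simp add: flag_semigroup_two_step power_mult)

theorem lemma12:
  fixes V1 V1' :: "('a::{field,finite} ^ 'n) set"
  assumes "CARD('n) \<ge> 2"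
    and "is_flag [{0}, V1, UNIV]"
    and "is_flag [{0}, V1', UNIV]"
  shows "semigroup_isomorphic (flag_semigroup [{0}, V1, UNIV]) (flag_semigroup [{0}, V1', UNIV])
     \<longleftrightarrow> {vec.dim V1, CARD('n) - vec.dim V1} = {vec.dim V1', CARD('n) - vec.dim V1'}"
proof -
  have V1: "vec.subspace V1" and V1': "vec.subspace V1'"
    using assms(2,3) by (simp_all add: is_flag_def)
  have "1 < CARD('a)"
    using card_mono[of UNIV "{0 :: 'a, 1}"] by simp
  have "semigroup_isomorphic (flag_semigroup [{0}, V1, UNIV]) (flag_semigroup [{0}, V1', UNIV])
     \<longleftrightarrow> card (flag_semigroup [{0}, V1, UNIV]) = card (flag_semigroup [{0}, V1', UNIV])"
    by (rule semigroup_isomorphic_zero_product_iff_card_eq)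
      (auto simp: flag_semigroup_two_step vec.subspace_0[OF V1] vec.subspace_0[OF V1']
        intro: matrix_mul_eq_0_if_range_sub_kernel)
  also have "\<dots> \<longleftrightarrow> vec.dim V1 * (CARD('n) - vec.dim V1) = vec.dim V1' * (CARD('n) - vec.dim V1')"
    using \<open>1 < CARD('a)\<close> by (simp add: card_flag_semigroup_two_step V1 V1' power_inject_exp)
  also have "\<dots> \<longleftrightarrow> {vec.dim V1, CARD('n) - vec.dim V1} = {vec.dim V1', CARD('n) - vec.dim V1'}"
    by (rule mult_diff_eq_mult_diff_iff[OF dim_subset_UNIV_cart_gen dim_subset_UNIV_cart_gen])
  finally show ?thesis .
qed

end
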